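(* In the multi-commodity market model described in the context, assume all lower bounds $\alpha'_{is}$, $\beta'_{js}$ are finite real numbers (upper bounds may equal $+\infty$), the set $W$ is nonempty, and all price functions $g_{is}$ and $h_{js}$ ($i\in I_s$, $j\in J_s$, $s\in N$) are continuous on $W$. Suppose the following coercivity condition (C) holds: there exists $r>0$ such that for every $w=(x,y)\in W$, every $s\in N$ and every $l\in J^u_s$ with $y_{ls}>\max\{r,\beta'_{ls}\}$, there exists $k\in I^u_s$ with $x_{ks}>\alpha'_{ks}$ and $g_{ks}(w)\ge h_{ls}(w)$. Then the variational inequality $$\text{find } \bar w\in W:\ \sum_{s\in N}\Big[\sum_{i\in I_s} g_{is}(\bar w)(x_{is}-\bar x_{is})-\sum_{j\in J_s} h_{js}(\bar w)(y_{js}-\bar y_{js})\Big]\ge 0\quad \forall w=(x,y)\in W$$ has a solution.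
   Context: Let $N=\{1,\dots,n\}$ index commodities. For each $s\in N$ let $I_s$ (traders) and $J_s$ (buyers) be finite index sets. Variables: offer values $x_{is}$, $i\in I_s$, and bid values $y_{js}$, $j\in J_s$; $x=(x_{is})$, $y=(y_{js})$, $w=(x,y)\in\mathbb{R}^m$. Capacity bounds: $\alpha'_{is}\in\mathbb{R}$, $\alpha''_{is}\in(\alpha'_{is},+\infty]$, $\beta'_{js}\in\mathbb{R}$, $\beta''_{js}\in(\beta'_{js},+\infty]$. Given $b_s\in\mathbb{R}$, the feasible set is $W=\prod_{s\in N}W_s$ with $$W_s=\Big\{(x_{(s)},y_{(s)}) : \sum_{i\in I_s}x_{is}-\sum_{j\in J_s}y_{js}=b_s,\ \alpha'_{is}\le x_{is}\le\alpha''_{is}\ (i\in I_s),\ \beta'_{js}\le y_{js}\le\beta''_{js}\ (j\in J_s)\Big\}$$ (an upper bound $+\infty$ means no upper constraint). Price functions $g_{is},h_{js}:W\to\mathbb{R}$. Index sets of unbounded participants: $I^u_s=\{i\in I_s:\alpha''_{is}=+\infty\}$, $J^u_s=\{j\in J_s:\beta''_{js}=+\infty\}$. *)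

theory Defs
  imports "HOL-Analysis.Analysis"
begin

text \<open>A point w = (x,y) is a pair of functions: x i s is the offer of trader i of
commodity s, y j s the bid of buyer j of commodity s. Coordinates outside the
index sets are fixed to 0, so W is a subset of a copy of R^m (product topology).
Upper bounds are extended reals (\<infinity> means no upper bound).\<close>

type_synonym ('i,'j) point = "('i \<Rightarrow> nat \<Rightarrow> real) \<times> ('j \<Rightarrow> nat \<Rightarrow> real)"

definition feasible_set ::
  "nat \<Rightarrow> (nat \<Rightarrow> 'i set) \<Rightarrow> (nat \<Rightarrow> 'j set) \<Rightarrow> (nat \<Rightarrow> real)
   \<Rightarrow> ('i \<Rightarrow> nat \<Rightarrow> real) \<Rightarrow> ('i \<Rightarrow> nat \<Rightarrow> ereal)
   \<Rightarrow> ('j \<Rightarrow> nat \<Rightarrow> real) \<Rightarrow> ('j \<Rightarrow> nat \<Rightarrow> ereal) \<Rightarrow> ('i,'j) point set" where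
  "feasible_set n I J b \<alpha>1 \<alpha>2 \<beta>1 \<beta>2 =
    {(x, y). (\<forall>s i. (s \<notin> {1..n} \<or> i \<notin> I s) \<longrightarrow> x i s = 0)
           \<and> (\<forall>s j. (s \<notin> {1..n} \<or> j \<notin> J s) \<longrightarrow> y j s = 0)
           \<and> (\<forall>s\<in>{1..n}. (\<Sum>i\<in>I s. x i s) - (\<Sum>j\<in>J s. y j s) = b s
                \<and> (\<forall>i\<in>I s. \<alpha>1 i s \<le> x i s \<and> ereal (x i s) \<le> \<alpha>2 i s)
                \<and> (\<forall>j\<in>J s. \<beta>1 j s \<le> y j s \<and> ereal (y j s) \<le> \<beta>2 j s))}"

end

theory Submission
  imports Defs "HOL-Homology.Homology"
begin

text \<open>
  Capping the unbounded bids at a level \<open>R\<close> makes the feasible set compact and keeps it convex,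
  so the inequality has a solution \<open>w\<close> on the capped set: by the Hartman--Stampacchia argument its
  solutions are the fixed points of \<open>v \<mapsto> P (v - G v)\<close>, \<open>P\<close> the nearest-point projection, and
  Brouwer's theorem applies, which in turn follows from the non-contractibility of spheres.
  For \<open>R > r\<close> coercivity pairs each buyer whose bid sits at the cap with a seller whose offer
  exceeds its lower bound and whose price is at least the buyer's. Moving from \<open>w\<close> towards any
  feasible \<open>u\<close>, while cutting the excess of those bids and the same amounts of the paired offers,
  stays in the capped set for small steps \<open>t\<close>; there the variational form equals
  \<open>t (\<Phi> u - E)\<close>, where \<open>\<Phi> u\<close> is its value at \<open>u\<close> and \<open>E \<ge> 0\<close>. Hence \<open>\<Phi> u \<ge> 0\<close>.
\<close>

section \<open>Brouwer's fixed point theorem in coordinate spaces\<close>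

definition coord_ball :: "nat \<Rightarrow> (nat \<Rightarrow> real) set" where
  "coord_ball p = {x. (\<forall>i>p. x i = 0) \<and> (\<Sum>i\<le>p. (x i)\<^sup>2) \<le> 1}"

definition coord_sphere :: "nat \<Rightarrow> (nat \<Rightarrow> real) set" where
  "coord_sphere p = {x. (\<forall>i>p. x i = 0) \<and> (\<Sum>i\<le>p. (x i)\<^sup>2) = 1}"

lemma nsphere_eq_coord_sphere: "nsphere p = top_of_set (coord_sphere p)"
  by (simp add: nsphere euclidean_product_topology coord_sphere_def conj_commute)

lemma continuous_on_coordinate:
  "continuous_on S f \<Longrightarrow> continuous_on S (\<lambda>z. (f z :: 'a \<Rightarrow> 'b::topological_space) i)"
  by (rule continuous_on_compose2[OF continuous_on_product_coordinates]) auto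

lemma contractible_coord_ball: "contractible (coord_ball p)"
  unfolding contractible_def
proof (intro exI)
  let ?h = "\<lambda>(t::real, x::nat \<Rightarrow> real). (\<lambda>i. (1 - t) * x i)"
  show "homotopic_with_canon (\<lambda>x. True) (coord_ball p) (coord_ball p) id (\<lambda>x i. 0)"
  proof (subst homotopic_with, simp, intro exI conjI)
    show "continuous_map (prod_topology (top_of_set {0..1}) (top_of_set (coord_ball p)))
            (top_of_set (coord_ball p)) ?h"
    proof (simp, intro conjI)
      show "continuous_on ({0..1} \<times> coord_ball p) ?h"
        by (intro continuous_on_coordinatewise_then_product)
           (simp add: case_prod_beta, intro continuous_intros continuous_on_coordinate)
      show "?h \<in> {0..1} \<times> coord_ball p \<rightarrow> coord_ball p"
      proof (clarsimp simp: coord_ball_def)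
        fix t :: real and x :: "nat \<Rightarrow> real"
        assume t: "0 \<le> t" "t \<le> 1" and x: "\<forall>i>p. x i = 0" "(\<Sum>i\<le>p. (x i)\<^sup>2) \<le> 1"
        have "(\<Sum>i\<le>p. ((1 - t) * x i)\<^sup>2) = (1 - t)\<^sup>2 * (\<Sum>i\<le>p. (x i)\<^sup>2)"
          by (simp add: power_mult_distrib sum_distrib_left)
        also have "\<dots> \<le> 1 * 1"
          using t x by (intro mult_mono) (auto simp: power_le_one sum_nonneg)
        finally show "(\<Sum>i\<le>p. ((1 - t) * x i)\<^sup>2) \<le> 1" by simp
      qed
    qed
  qed auto
qed

lemma sum_squares_pos_if_nonzero:
  fixes v :: "nat \<Rightarrow> real"
  assumes "\<forall>i>p. v i = 0" and "v \<noteq> (\<lambda>i. 0)"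
  shows "(\<Sum>i\<le>p. (v i)\<^sup>2) > 0"
proof -
  obtain i where "v i \<noteq> 0" using assms(2) by auto
  then have "i \<le> p" using assms(1) by (meson not_le)
  then have "(v i)\<^sup>2 \<le> (\<Sum>i\<le>p. (v i)\<^sup>2)"
    by (intro member_le_sum) auto
  moreover have "(v i)\<^sup>2 > 0" using \<open>v i \<noteq> 0\<close> by simp
  ultimately show ?thesis by linarith
qed

definition coord_normalize :: "nat \<Rightarrow> (nat \<Rightarrow> real) \<Rightarrow> nat \<Rightarrow> real" where
  "coord_normalize p v = (\<lambda>i. v i / sqrt (\<Sum>k\<le>p. (v k)\<^sup>2))"

lemma continuous_map_coord_normalize:
  assumes cont: "\<And>i. continuous_on A (\<lambda>a. F a i)"
    and vanish: "\<And>a i. a \<in> A \<Longrightarrow> i > p \<Longrightarrow> F a i = 0"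
    and nonzero: "\<And>a. a \<in> A \<Longrightarrow> F a \<noteq> (\<lambda>i. 0)"
  shows "continuous_map (top_of_set A) (top_of_set (coord_sphere p)) (\<lambda>a. coord_normalize p (F a))"
proof -
  have pos: "(\<Sum>k\<le>p. (F a k)\<^sup>2) > 0" if "a \<in> A" for a
    using that vanish nonzero by (intro sum_squares_pos_if_nonzero) auto
  have "continuous_on A (\<lambda>a. coord_normalize p (F a))"
    unfolding coord_normalize_def
    using pos by (intro continuous_on_coordinatewise_then_product continuous_intros cont) force
  moreover have "coord_normalize p (F a) \<in> coord_sphere p" if "a \<in> A" for a
    using pos[OF that] vanish[OF that]
    by (simp add: coord_normalize_def coord_sphere_def power_divide flip: sum_divide_distrib)
  ultimately show ?thesis by auto
qed

lemma coord_ball_vanishes: "x \<in> coord_ball p \<Longrightarrow> i > p \<Longrightarrow> x i = 0"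
  by (simp add: coord_ball_def)

lemma coord_normalize_coord_sphere: "x \<in> coord_sphere p \<Longrightarrow> coord_normalize p x = x"
  by (simp add: coord_normalize_def coord_sphere_def)

lemma sphere_id_homotopic_normalized_displacement:
  assumes cont: "continuous_on (coord_ball p) g" and into: "g ` coord_ball p \<subseteq> coord_ball p"
    and no_fix: "\<And>x. x \<in> coord_sphere p \<Longrightarrow> g x \<noteq> x"
  shows "homotopic_with_canon (\<lambda>x. True) (coord_sphere p) (coord_sphere p) id
           (\<lambda>x. coord_normalize p (\<lambda>i. x i - g x i))"
proof -
  let ?D = "coord_ball p" and ?S = "coord_sphere p"
  have SD: "?S \<subseteq> ?D" by (auto simp: coord_sphere_def coord_ball_def)
  define H where "H z = coord_normalize p (\<lambda>i. snd z i - fst z * g (snd z) i)" for z :: "real \<times> _"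
  \<comment> \<open>If \<open>x = t g x\<close> on the sphere, then \<open>1 = t\<^sup>2 |g x|\<^sup>2 \<le> t\<^sup>2 \<le> t\<close>, so \<open>t = 1\<close> and \<open>x\<close> is fixed.\<close>
  have nonzero: "(\<lambda>i. x i - t * g x i) \<noteq> (\<lambda>i. 0)" if "t \<in> {0..1}" "x \<in> ?S" for t x
  proof
    assume "(\<lambda>i. x i - t * g x i) = (\<lambda>i. 0)"
    then have x_eq: "x i = t * g x i" for i by (metis eq_iff_diff_eq_0)
    have gx: "g x \<in> ?D" using into SD that by auto
    have "1 = (\<Sum>i\<le>p. (x i)\<^sup>2)" using that by (simp add: coord_sphere_def)
    also have "\<dots> = t\<^sup>2 * (\<Sum>i\<le>p. (g x i)\<^sup>2)"
      by (simp add: x_eq power_mult_distrib sum_distrib_left)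
    also have "\<dots> \<le> t\<^sup>2" using gx by (intro mult_left_le) (auto simp: coord_ball_def)
    also have "\<dots> \<le> t" using that(1) by (simp add: power2_eq_square mult_left_le_one_le)
    finally have "t = 1" using that(1) by simp
    then have "g x = x" using x_eq by auto
    then show False using no_fix that by blast
  qed
  have "continuous_map (top_of_set ({0..1} \<times> ?S)) (top_of_set ?S) H"
    unfolding H_def
  proof (rule continuous_map_coord_normalize)
    have "continuous_on ({0..1} \<times> ?S) (\<lambda>z. g (snd z))"
      by (rule continuous_on_compose2[OF cont continuous_on_snd[OF continuous_on_id]]) (use SD in auto)
    from continuous_on_coordinate[OF this]
      continuous_on_coordinate[OF continuous_on_snd[OF continuous_on_id]]
    show "continuous_on ({0..1} \<times> ?S) (\<lambda>z. snd z i - fst z * g (snd z) i)" for i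
      by (intro continuous_on_diff continuous_on_mult continuous_on_fst continuous_on_id)
    show "snd z i - fst z * g (snd z) i = 0" if "z \<in> {0..1} \<times> ?S" "i > p" for z i
    proof -
      have "snd z \<in> ?D" using that SD by auto
      moreover from this have "g (snd z) \<in> ?D" using into by blast
      ultimately show ?thesis using that(2) by (simp add: coord_ball_vanishes)
    qed
    show "(\<lambda>i. snd z i - fst z * g (snd z) i) \<noteq> (\<lambda>i. 0)" if "z \<in> {0..1} \<times> ?S" for z
      using that nonzero by auto
  qed
  moreover have "H (0, x) = x" "H (1, x) = coord_normalize p (\<lambda>i. x i - g x i)" if "x \<in> ?S" for x
    using that by (simp_all add: H_def coord_normalize_coord_sphere)
  ultimately show ?thesis
    by (subst homotopic_with) auto
qed

lemma brouwer_coord_ball: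
  assumes cont: "continuous_on (coord_ball p) g" and into: "g ` coord_ball p \<subseteq> coord_ball p"
  shows "\<exists>x\<in>coord_ball p. g x = x"
proof (rule ccontr)
  assume no_fix: "\<not> (\<exists>x\<in>coord_ball p. g x = x)"
  let ?D = "coord_ball p" and ?S = "coord_sphere p"
  define \<phi> where "\<phi> x = coord_normalize p (\<lambda>i. x i - g x i)" for x
  have SD: "?S \<subseteq> ?D" by (auto simp: coord_sphere_def coord_ball_def)
  have "continuous_map (top_of_set ?D) (top_of_set ?S) \<phi>"
    unfolding \<phi>_def
  proof (rule continuous_map_coord_normalize)
    show "continuous_on ?D (\<lambda>x. x i - g x i)" for i
      by (intro continuous_on_diff continuous_on_coordinate[OF cont]
            continuous_on_coordinate[OF continuous_on_id])
    show "x i - g x i = 0" if "x \<in> ?D" "i > p" for x i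
    proof -
      have "g x \<in> ?D" using that into by auto
      then show ?thesis using that by (simp add: coord_ball_vanishes)
    qed
    show "(\<lambda>i. x i - g x i) \<noteq> (\<lambda>i. 0)" if "x \<in> ?D" for x
      using no_fix that by (metis eq_iff_diff_eq_0 ext)
  qed
  moreover have "continuous_map (top_of_set ?S) (top_of_set ?D) id"
    using SD by (auto simp: continuous_on_id)
  \<comment> \<open>the normalized displacement factors through the contractible ball\<close>
  ultimately obtain c where "homotopic_with_canon (\<lambda>h. True) ?S ?S \<phi> (\<lambda>x. c)"
    using nullhomotopic_through_contractible_space contractible_coord_ball
    by (metis comp_id contractible_space_top_of_set)
  moreover have "homotopic_with_canon (\<lambda>x. True) ?S ?S id \<phi>"
    unfolding \<phi>_def
    using no_fix SD by (intro sphere_id_homotopic_normalized_displacement[OF cont into]) blast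
  ultimately have "contractible_space (top_of_set ?S)"
    unfolding contractible_space_def by (metis homotopic_with_trans)
  then show False using non_contractible_space_nsphere[of p] by (simp add: nsphere_eq_coord_sphere)
qed

section \<open>Variational inequalities on compact pointwise convex sets\<close>

definition pointwise_convex :: "('c \<Rightarrow> real) set \<Rightarrow> bool" where
  "pointwise_convex K \<longleftrightarrow> (\<forall>u\<in>K. \<forall>v\<in>K. \<forall>t\<in>{0..1}. (\<lambda>c. (1 - t) * u c + t * v c) \<in> K)"

lemma nearest_point_obtuse_angle:
  fixes C :: "'c set"
  assumes "pointwise_convex K" and "v \<in> K" and "u \<in> K"
    and nearest: "\<And>w. w \<in> K \<Longrightarrow> (\<Sum>c\<in>C. (z c - v c)\<^sup>2) \<le> (\<Sum>c\<in>C. (z c - w c)\<^sup>2)"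
  shows "(\<Sum>c\<in>C. (z c - v c) * (u c - v c)) \<le> 0"
proof (rule ccontr)
  define A where "A = (\<Sum>c\<in>C. (z c - v c) * (u c - v c))"
  define Q where "Q = (\<Sum>c\<in>C. (u c - v c)\<^sup>2)"
  assume "\<not> ?thesis"
  then have A: "A > 0" by (simp add: A_def)
  have Q: "Q \<ge> 0" unfolding Q_def by (intro sum_nonneg) auto
  \<comment> \<open>moving from \<open>v\<close> towards \<open>u\<close> by a small step \<open>t\<close> would decrease the distance to \<open>z\<close>\<close>
  define t where "t = min 1 (A / (Q + 1))"
  have t: "0 < t" "t \<le> 1" using A Q by (auto simp: t_def)
  have "(\<lambda>c. (1 - t) * v c + t * u c) \<in> K"
    using assms(1-3) t unfolding pointwise_convex_def by auto
  from nearest[OF this]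
  have "(\<Sum>c\<in>C. (z c - v c)\<^sup>2) \<le> (\<Sum>c\<in>C. (z c - ((1 - t) * v c + t * u c))\<^sup>2)" .
  also have "\<dots> = (\<Sum>c\<in>C. (z c - v c)\<^sup>2 - 2 * t * ((z c - v c) * (u c - v c)) + t\<^sup>2 * (u c - v c)\<^sup>2)"
    by (intro sum.cong) (auto simp: power2_eq_square algebra_simps)
  also have "\<dots> = (\<Sum>c\<in>C. (z c - v c)\<^sup>2) - 2 * t * A + t\<^sup>2 * Q"
    by (simp add: sum.distrib sum_subtractf sum_distrib_left A_def Q_def)
  finally have "2 * t * A \<le> t\<^sup>2 * Q" by simp
  then have "2 * A \<le> t * Q" using t by (simp add: power2_eq_square)
  moreover have "t * Q \<le> A / (Q + 1) * Q" using Q t by (intro mult_right_mono) (auto simp: t_def)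
  moreover have "A / (Q + 1) * Q < A" using A Q by (simp add: field_simps)
  ultimately show False using A by linarith
qed

lemma projection_nonexpansive:
  fixes C :: "'c set"
  assumes obtuse: "\<And>z u. u \<in> K \<Longrightarrow> (\<Sum>c\<in>C. (z c - P z c) * (u c - P z c)) \<le> (0::real)"
    and into: "\<And>z. P z \<in> K"
  shows "(\<Sum>c\<in>C. (P z1 c - P z2 c)\<^sup>2) \<le> (\<Sum>c\<in>C. (z1 c - z2 c)\<^sup>2)"
proof -
  have "(P z1 c - P z2 c)\<^sup>2 = (z1 c - z2 c) * (P z1 c - P z2 c)
      + (z1 c - P z1 c) * (P z2 c - P z1 c) + (z2 c - P z2 c) * (P z1 c - P z2 c)" for c
    by (simp add: power2_eq_square algebra_simps)
  then have "(\<Sum>c\<in>C. (P z1 c - P z2 c)\<^sup>2) = (\<Sum>c\<in>C. (z1 c - z2 c) * (P z1 c - P z2 c))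
      + (\<Sum>c\<in>C. (z1 c - P z1 c) * (P z2 c - P z1 c)) + (\<Sum>c\<in>C. (z2 c - P z2 c) * (P z1 c - P z2 c))"
    by (simp add: sum.distrib)
  then have "(\<Sum>c\<in>C. (P z1 c - P z2 c)\<^sup>2) \<le> (\<Sum>c\<in>C. (z1 c - z2 c) * (P z1 c - P z2 c))"
    using obtuse[OF into, of z1 z2] obtuse[OF into, of z2 z1] by linarith
  moreover have "2 * (\<Sum>c\<in>C. (z1 c - z2 c) * (P z1 c - P z2 c))
      \<le> (\<Sum>c\<in>C. (z1 c - z2 c)\<^sup>2) + (\<Sum>c\<in>C. (P z1 c - P z2 c)\<^sup>2)"
    unfolding sum_distrib_left sum.distrib[symmetric]
  proof (intro sum_mono)
    fix c
    show "2 * ((z1 c - z2 c) * (P z1 c - P z2 c)) \<le> (z1 c - z2 c)\<^sup>2 + (P z1 c - P z2 c)\<^sup>2"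
      using sum_squares_bound[of "z1 c - z2 c" "P z1 c - P z2 c"] by (simp only: mult.assoc)
  qed
  ultimately show ?thesis by linarith
qed

lemma continuous_on_if_nonexpansive:
  fixes C :: "'c set" and P :: "('c \<Rightarrow> real) \<Rightarrow> 'c \<Rightarrow> real"
  assumes "finite C" and supp: "\<And>z c. c \<notin> C \<Longrightarrow> P z c = 0"
    and nonexp: "\<And>z1 z2. (\<Sum>c\<in>C. (P z1 c - P z2 c)\<^sup>2) \<le> (\<Sum>c\<in>C. (z1 c - z2 c)\<^sup>2)"
  shows "continuous_on UNIV P"
proof (intro continuous_on_coordinatewise_then_product)
  fix c
  show "continuous_on UNIV (\<lambda>z. P z c)"
  proof (cases "c \<in> C")
    case False
    then show ?thesis by (simp add: supp)
  next
    case True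
    show ?thesis
      unfolding continuous_on_def
    proof
      fix z0 :: "'c \<Rightarrow> real"
      define d where "d = (\<lambda>z::'c \<Rightarrow> real. \<Sum>c\<in>C. (z c - z0 c)\<^sup>2)"
      have "continuous_on UNIV d" unfolding d_def
        by (intro continuous_on_sum continuous_on_power continuous_on_diff continuous_on_const
              continuous_on_coordinate[OF continuous_on_id])
      then have "d \<midarrow>z0\<rightarrow> d z0"
        by (simp add: continuous_on_def)
      then have "d \<midarrow>z0\<rightarrow> 0" by (simp add: d_def)
      then have sqrt_d: "(\<lambda>z. sqrt (d z)) \<midarrow>z0\<rightarrow> 0"
        using tendsto_real_sqrt by force
      have "norm (P z c - P z0 c) \<le> sqrt (d z)" for z
      proof -
        have "(P z c - P z0 c)\<^sup>2 \<le> (\<Sum>c\<in>C. (P z c - P z0 c)\<^sup>2)"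
          using True assms(1) by (intro member_le_sum) auto
        also have "\<dots> \<le> d z" using nonexp by (simp add: d_def)
        finally show ?thesis by (simp add: real_le_rsqrt)
      qed
      then have "(\<lambda>z. P z c - P z0 c) \<midarrow>z0\<rightarrow> 0"
        by (intro Lim_null_comparison[OF _ sqrt_d]) auto
      then show "(\<lambda>z. P z c) \<midarrow>z0\<rightarrow> P z0 c"
        by (simp add: LIM_zero_cancel)
    qed
  qed
qed

lemma exists_continuous_projection:
  fixes C :: "'c set" and K :: "('c \<Rightarrow> real) set"
  assumes "finite C" and "compact K" and "K \<noteq> {}" and "pointwise_convex K"
    and supp: "\<forall>v\<in>K. \<forall>c. c \<notin> C \<longrightarrow> v c = 0"
  obtains P where "continuous_on UNIV P" and "\<And>z. P z \<in> K" and "\<And>z. z \<in> K \<Longrightarrow> P z = z"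
    and "\<And>z u. u \<in> K \<Longrightarrow> (\<Sum>c\<in>C. (z c - P z c) * (u c - P z c)) \<le> 0"
proof -
  define is_proj where
    "is_proj z v \<longleftrightarrow> v \<in> K \<and> (\<forall>u\<in>K. (\<Sum>c\<in>C. (z c - v c) * (u c - v c)) \<le> 0)" for z v
  have "\<exists>v. is_proj z v" for z
  proof -
    have "continuous_on K (\<lambda>v. \<Sum>c\<in>C. (z c - v c)\<^sup>2)"
      by (intro continuous_on_sum continuous_on_power continuous_on_diff continuous_on_const
            continuous_on_coordinate[OF continuous_on_id])
    from continuous_attains_inf[OF assms(2,3) this] obtain v where
      "v \<in> K" "\<And>w. w \<in> K \<Longrightarrow> (\<Sum>c\<in>C. (z c - v c)\<^sup>2) \<le> (\<Sum>c\<in>C. (z c - w c)\<^sup>2)"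
      by blast
    then show ?thesis
      unfolding is_proj_def using nearest_point_obtuse_angle[OF assms(4)] by blast
  qed
  then obtain P where P: "\<And>z. is_proj z (P z)" by metis
  then have into: "P z \<in> K" and obtuse: "\<And>u. u \<in> K \<Longrightarrow> (\<Sum>c\<in>C. (z c - P z c) * (u c - P z c)) \<le> 0"
    for z by (auto simp: is_proj_def)
  have "P z = z" if "z \<in> K" for z
  proof
    fix c
    have "(\<Sum>c\<in>C. (z c - P z c)\<^sup>2) \<le> 0"
      using obtuse[OF that, of z] by (simp add: power2_eq_square)
    then have "\<forall>c\<in>C. (z c - P z c)\<^sup>2 = 0"
      using sum_nonneg_eq_0_iff[OF assms(1)] by (metis (no_types, lifting) order_antisym sum_nonneg zero_le_power2)
    then show "P z c = z c"
      using supp[rule_format, OF into[of z]] supp[rule_format, OF that] by (cases "c \<in> C") auto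
  qed
  moreover have "continuous_on UNIV P"
    by (rule continuous_on_if_nonexpansive[OF assms(1) _ projection_nonexpansive[OF obtuse into]])
       (use supp into in blast)
  ultimately show ?thesis using that into obtuse by blast
qed

lemma compact_sum_squares_bounded:
  fixes K :: "('c \<Rightarrow> real) set"
  assumes "compact K"
  obtains R where "R > 0" and "\<And>v. v \<in> K \<Longrightarrow> (\<Sum>c\<in>C. (v c)\<^sup>2) \<le> R\<^sup>2"
proof -
  have "compact ((\<lambda>v. \<Sum>c\<in>C. (v c)\<^sup>2) ` K)"
    by (intro compact_continuous_image assms continuous_on_sum continuous_on_power
          continuous_on_coordinate[OF continuous_on_id])
  then obtain B where B: "\<forall>v\<in>K. \<bar>\<Sum>c\<in>C. (v c)\<^sup>2\<bar> \<le> B"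
    by (auto dest!: compact_imp_bounded simp: bounded_real)
  have "\<bar>B\<bar> + 1 \<le> (\<bar>B\<bar> + 1)\<^sup>2" by (rule self_le_power) auto
  then have B_le: "B \<le> (\<bar>B\<bar> + 1)\<^sup>2" using abs_ge_self[of B] by linarith
  show ?thesis
  proof (rule that[of "\<bar>B\<bar> + 1"])
    show "(\<Sum>c\<in>C. (v c)\<^sup>2) \<le> (\<bar>B\<bar> + 1)\<^sup>2" if "v \<in> K" for v
      using abs_le_D1[OF bspec[OF B that]] B_le by linarith
  qed simp
qed

lemma embedding_into_coord_ball:
  fixes C :: "'c set" and K :: "('c \<Rightarrow> real) set"
  assumes "finite C" and "compact K" and supp: "\<forall>v\<in>K. \<forall>c. c \<notin> C \<longrightarrow> v c = 0"
  shows "\<exists>m enc dec. continuous_on K enc \<and> enc \<in> K \<rightarrow> coord_ball m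
    \<and> continuous_on UNIV dec \<and> (\<forall>v\<in>K. dec (enc v) = v)"
proof -
  obtain R where R: "R > 0" "\<And>v. v \<in> K \<Longrightarrow> (\<Sum>c\<in>C. (v c)\<^sup>2) \<le> R\<^sup>2"
    using compact_sum_squares_bounded[OF assms(2)] by blast
  define m where "m = card C"
  obtain h where h: "bij_betw h {..<m} C"
    using ex_bij_betw_nat_finite[OF assms(1)] by (auto simp: m_def atLeast0LessThan)
  \<comment> \<open>the ball has dimension \<open>m + 1\<close>; the spare coordinate avoids a special case for \<open>C = {}\<close>\<close>
  define enc where "enc v = (\<lambda>k. if k < m then v (h k) / R else 0)" for v :: "'c \<Rightarrow> real"
  define dec where "dec x = (\<lambda>c. if c \<in> C then R * x (inv_into {..<m} h c) else 0)"
    for x :: "nat \<Rightarrow> real"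
  have "enc v \<in> coord_ball m" if "v \<in> K" for v
  proof -
    have "(\<Sum>k\<le>m. (enc v k)\<^sup>2) = (\<Sum>k<m. (v (h k))\<^sup>2 / R\<^sup>2)"
      by (simp add: enc_def power_divide flip: lessThan_Suc_atMost)
    also have "\<dots> = (\<Sum>c\<in>C. (v c)\<^sup>2) / R\<^sup>2"
      using sum.reindex_bij_betw[OF h, of "\<lambda>c. (v c)\<^sup>2"] by (simp flip: sum_divide_distrib)
    also have "\<dots> \<le> 1" using R that by simp
    finally show ?thesis by (simp add: coord_ball_def enc_def)
  qed
  moreover have "dec (enc v) = v" if "v \<in> K" for v
  proof
    fix c
    show "dec (enc v) c = v c"
    proof (cases "c \<in> C")
      case True
      then have "inv_into {..<m} h c < m" "h (inv_into {..<m} h c) = c"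
        using h by (auto simp: bij_betw_def inv_into_into f_inv_into_f)
      then show ?thesis using True R by (simp add: dec_def enc_def)
    next
      case False
      then show ?thesis using supp that by (simp add: dec_def)
    qed
  qed
  moreover have "continuous_on K enc"
    unfolding enc_def
  proof (intro continuous_on_coordinatewise_then_product)
    show "continuous_on K (\<lambda>v. if k < m then v (h k) / R else 0)" for k
      using R(1) by (cases "k < m") (auto intro!: continuous_on_divide continuous_on_coordinate[OF continuous_on_id])
  qed
  moreover have "continuous_on UNIV dec"
    unfolding dec_def
  proof (intro continuous_on_coordinatewise_then_product)
    show "continuous_on UNIV (\<lambda>x. if c \<in> C then R * x (inv_into {..<m} h c) else 0)" for c
      by (cases "c \<in> C") (auto intro!: continuous_on_mult continuous_on_coordinate[OF continuous_on_id])
  qed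
  ultimately show ?thesis by blast
qed

lemma brouwer_pointwise_convex:
  fixes C :: "'c set" and K :: "('c \<Rightarrow> real) set"
  assumes "finite C" and "compact K" and "K \<noteq> {}" and "pointwise_convex K"
    and supp: "\<forall>v\<in>K. \<forall>c. c \<notin> C \<longrightarrow> v c = 0"
    and "continuous_on K f" and "f ` K \<subseteq> K"
  shows "\<exists>x\<in>K. f x = x"
proof -
  obtain P where P_cont: "continuous_on UNIV P" and P_into: "\<And>z. P z \<in> K"
    and P_id: "\<And>z. z \<in> K \<Longrightarrow> P z = z"
    and "\<And>z u. u \<in> K \<Longrightarrow> (\<Sum>c\<in>C. (z c - P z c) * (u c - P z c)) \<le> 0"
    using exists_continuous_projection[OF assms(1-4) supp] by auto
  from embedding_into_coord_ball[OF assms(1,2) supp]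
  obtain m enc dec where enc_cont: "continuous_on K enc" and enc_into: "enc \<in> K \<rightarrow> coord_ball m"
    and dec_cont: "continuous_on UNIV dec" and dec_enc: "\<And>v. v \<in> K \<Longrightarrow> dec (enc v) = v"
    by blast
  have "continuous_on (coord_ball m) (P \<circ> dec)"
    by (rule continuous_on_compose[OF continuous_on_subset[OF dec_cont]])
      (auto intro: continuous_on_subset[OF P_cont])
  then obtain x where "x \<in> K" "f x = x"
  proof (rule invertible_fixpoint_property[OF enc_cont enc_into])
    show "P \<circ> dec \<in> coord_ball m \<rightarrow> K" using P_into by simp
    show "(P \<circ> dec) (enc v) = v" if "v \<in> K" for v
      using dec_enc[OF that] P_id[OF that] by simp
    show "f \<in> K \<rightarrow> K" using assms(7) by blast
    show "\<exists>x\<in>coord_ball m. g x = x"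
      if "continuous_on (coord_ball m) g" "g \<in> coord_ball m \<rightarrow> coord_ball m" for g
      using that by (intro brouwer_coord_ball) auto
  qed (rule assms(6))
  then show ?thesis by blast
qed

theorem hartman_stampacchia:
  fixes C :: "'c set" and K :: "('c \<Rightarrow> real) set"
  assumes "finite C" and "compact K" and "K \<noteq> {}" and "pointwise_convex K"
    and supp: "\<forall>v\<in>K. \<forall>c. c \<notin> C \<longrightarrow> v c = 0"
    and cont: "\<And>c. c \<in> C \<Longrightarrow> continuous_on K (G c)"
  shows "\<exists>v\<in>K. \<forall>u\<in>K. (\<Sum>c\<in>C. G c v * (u c - v c)) \<ge> 0"
proof -
  obtain P where P_cont: "continuous_on UNIV P" and P_into: "\<And>z. P z \<in> K"
    and "\<And>z. z \<in> K \<Longrightarrow> P z = z" and obtuse: "\<And>z u. u \<in> K \<Longrightarrow> (\<Sum>c\<in>C. (z c - P z c) * (u c - P z c)) \<le> 0"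
    using exists_continuous_projection[OF assms(1-4) supp] by auto
  \<comment> \<open>solutions are the fixed points of \<open>v \<mapsto> P (v - G v)\<close>\<close>
  define q where "q v = (\<lambda>c. if c \<in> C then v c - G c v else 0)" for v
  have "continuous_on K q"
    unfolding q_def
  proof (intro continuous_on_coordinatewise_then_product)
    show "continuous_on K (\<lambda>v. if c \<in> C then v c - G c v else 0)" for c
      by (cases "c \<in> C") (auto intro!: continuous_on_diff cont continuous_on_coordinate[OF continuous_on_id])
  qed
  then have "continuous_on K (P \<circ> q)"
    by (intro continuous_on_compose continuous_on_subset[OF P_cont]) auto
  moreover have "(P \<circ> q) ` K \<subseteq> K" using P_into by auto
  ultimately have "\<exists>v\<in>K. (P \<circ> q) v = v"
    by (rule brouwer_pointwise_convex[OF assms(1-4) supp])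
  then obtain v where v: "v \<in> K" "P (q v) = v" by auto
  have "(\<Sum>c\<in>C. G c v * (u c - v c)) \<ge> 0" if "u \<in> K" for u
  proof -
    have "(\<Sum>c\<in>C. G c v * (u c - v c)) = - (\<Sum>c\<in>C. (q v c - P (q v) c) * (u c - P (q v) c))"
      unfolding v(2) by (simp add: q_def flip: sum_negf)
    then show ?thesis using obtuse[OF that, of "q v"] by simp
  qed
  then show ?thesis using v(1) by blast
qed

section \<open>The market model\<close>

definition bid_cap :: "nat \<Rightarrow> (nat \<Rightarrow> 'j set) \<Rightarrow> ('j \<Rightarrow> nat \<Rightarrow> ereal) \<Rightarrow> real \<Rightarrow> ('i,'j) point set" where
  "bid_cap n J \<beta>2 R = {w. \<forall>s\<in>{1..n}. \<forall>l\<in>J s. \<beta>2 l s = \<infinity> \<longrightarrow> snd w l s \<le> R}"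

definition market_vi_form ::
  "nat \<Rightarrow> (nat \<Rightarrow> 'i set) \<Rightarrow> (nat \<Rightarrow> 'j set) \<Rightarrow> ('i \<Rightarrow> nat \<Rightarrow> ('i,'j) point \<Rightarrow> real)
   \<Rightarrow> ('j \<Rightarrow> nat \<Rightarrow> ('i,'j) point \<Rightarrow> real) \<Rightarrow> ('i,'j) point \<Rightarrow> ('i,'j) point \<Rightarrow> real" where
  "market_vi_form n I J g h wb w =
     (\<Sum>s\<in>{1..n}. (\<Sum>i\<in>I s. g i s wb * (fst w i s - fst wb i s))
                - (\<Sum>j\<in>J s. h j s wb * (snd w j s - snd wb j s)))"

text \<open>Points are flattened into real functions on the disjoint union of index pairs, where the
  results on pointwise convex sets apply.\<close>

type_synonym ('i,'j) coord = "nat \<times> 'i + nat \<times> 'j"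

definition to_coords :: "('i,'j) point \<Rightarrow> ('i,'j) coord \<Rightarrow> real" where
  "to_coords w c = (case c of Inl (s, i) \<Rightarrow> fst w i s | Inr (s, j) \<Rightarrow> snd w j s)"

definition of_coords :: "(('i,'j) coord \<Rightarrow> real) \<Rightarrow> ('i,'j) point" where
  "of_coords v = ((\<lambda>i s. v (Inl (s, i))), (\<lambda>j s. v (Inr (s, j))))"

definition market_coords :: "nat \<Rightarrow> (nat \<Rightarrow> 'i set) \<Rightarrow> (nat \<Rightarrow> 'j set) \<Rightarrow> ('i,'j) coord set" where
  "market_coords n I J = Inl ` (SIGMA s:{1..n}. I s) \<union> Inr ` (SIGMA s:{1..n}. J s)"

lemma of_coords_to_coords [simp]: "of_coords (to_coords w) = w"
  by (cases w) (simp add: of_coords_def to_coords_def)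

lemma continuous_on_of_coords: "continuous_on S of_coords"
  unfolding of_coords_def
  by (intro continuous_on_Pair continuous_on_coordinatewise_then_product
        continuous_on_coordinate[OF continuous_on_id])

lemma finite_market_coords:
  assumes "\<And>s. s \<in> {1..n} \<Longrightarrow> finite (I s)" and "\<And>s. s \<in> {1..n} \<Longrightarrow> finite (J s)"
  shows "finite (market_coords n I J)"
  using assms by (auto simp: market_coords_def intro!: finite_SigmaI)

lemma sum_market_coords:
  assumes "\<And>s. s \<in> {1..n} \<Longrightarrow> finite (I s)" and "\<And>s. s \<in> {1..n} \<Longrightarrow> finite (J s)"
  shows "(\<Sum>c\<in>market_coords n I J. F c)
       = (\<Sum>s\<in>{1..n}. (\<Sum>i\<in>I s. F (Inl (s, i))) + (\<Sum>j\<in>J s. F (Inr (s, j))))"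
proof -
  have fin: "finite (SIGMA s:{1..n}. I s)" "finite (SIGMA s:{1..n}. J s)"
    using assms by (auto intro!: finite_SigmaI)
  have "(\<Sum>c\<in>market_coords n I J. F c)
      = (\<Sum>c\<in>Inl ` (SIGMA s:{1..n}. I s). F c) + (\<Sum>c\<in>Inr ` (SIGMA s:{1..n}. J s). F c)"
    unfolding market_coords_def using fin by (intro sum.union_disjoint) auto
  also have "\<dots> = (\<Sum>p\<in>(SIGMA s:{1..n}. I s). F (Inl p)) + (\<Sum>p\<in>(SIGMA s:{1..n}. J s). F (Inr p))"
    by (simp add: sum.reindex)
  also have "\<dots> = (\<Sum>s\<in>{1..n}. (\<Sum>i\<in>I s. F (Inl (s, i))) + (\<Sum>j\<in>J s. F (Inr (s, j))))"
    using assms by (simp add: sum.Sigma sum.distrib)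
  finally show ?thesis .
qed

lemma feasible_setD:
  assumes "(x, y) \<in> feasible_set n I J b \<alpha>1 \<alpha>2 \<beta>1 \<beta>2"
  shows "s \<notin> {1..n} \<or> i \<notin> I s \<Longrightarrow> x i s = 0"
    and "s \<notin> {1..n} \<or> j \<notin> J s \<Longrightarrow> y j s = 0"
    and "s \<in> {1..n} \<Longrightarrow> (\<Sum>i\<in>I s. x i s) - (\<Sum>j\<in>J s. y j s) = b s"
    and "s \<in> {1..n} \<Longrightarrow> i \<in> I s \<Longrightarrow> \<alpha>1 i s \<le> x i s \<and> ereal (x i s) \<le> \<alpha>2 i s"
    and "s \<in> {1..n} \<Longrightarrow> j \<in> J s \<Longrightarrow> \<beta>1 j s \<le> y j s \<and> ereal (y j s) \<le> \<beta>2 j s"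
  using assms by (auto simp: feasible_set_def)

lemma feasible_vanishes_off_market_coords:
  assumes "of_coords v \<in> feasible_set n I J b \<alpha>1 \<alpha>2 \<beta>1 \<beta>2" and "c \<notin> market_coords n I J"
  shows "v c = 0"
  using assms by (cases c) (force simp: feasible_set_def of_coords_def market_coords_def image_iff)+

lemma convex_comb_ge: "(a::real) \<le> x \<Longrightarrow> a \<le> y \<Longrightarrow> 0 \<le> t \<Longrightarrow> t \<le> 1 \<Longrightarrow> a \<le> (1 - t) * x + t * y"
  using convex_bound_le[of "-x" "-a" "-y" "1 - t" t] by (simp add: algebra_simps)

lemma convex_comb_le: "x \<le> (a::real) \<Longrightarrow> y \<le> a \<Longrightarrow> 0 \<le> t \<Longrightarrow> t \<le> 1 \<Longrightarrow> (1 - t) * x + t * y \<le> a"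
  using convex_bound_le[of x a y "1 - t" t] by simp

lemma convex_comb_le_ereal:
  "ereal x \<le> e \<Longrightarrow> ereal y \<le> e \<Longrightarrow> 0 \<le> t \<Longrightarrow> t \<le> 1 \<Longrightarrow> ereal ((1 - t) * x + t * y) \<le> e"
  by (cases e) (auto intro: convex_comb_le)

lemma pointwise_convex_truncated_feasible:
  fixes I :: "nat \<Rightarrow> 'i set" and J :: "nat \<Rightarrow> 'j set"
  shows "pointwise_convex {v. of_coords v \<in> feasible_set n I J b \<alpha>1 \<alpha>2 \<beta>1 \<beta>2 \<inter> bid_cap n J \<beta>2 R}"
  unfolding pointwise_convex_def
proof (intro ballI)
  let ?W = "feasible_set n I J b \<alpha>1 \<alpha>2 \<beta>1 \<beta>2 \<inter> bid_cap n J \<beta>2 R"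
  fix u v :: "('i,'j) coord \<Rightarrow> real" and t :: real
  assume "u \<in> {v. of_coords v \<in> ?W}" "v \<in> {v. of_coords v \<in> ?W}" and t: "t \<in> {0..1}"
  then have u: "of_coords u \<in> ?W" and v: "of_coords v \<in> ?W" by auto
  have balance: "(\<Sum>i\<in>I s. (1 - t) * u (Inl (s, i)) + t * v (Inl (s, i)))
      - (\<Sum>j\<in>J s. (1 - t) * u (Inr (s, j)) + t * v (Inr (s, j))) = b s" if "s \<in> {1..n}" for s
  proof -
    have "(\<Sum>i\<in>I s. u (Inl (s, i))) - (\<Sum>j\<in>J s. u (Inr (s, j))) = b s"
      "(\<Sum>i\<in>I s. v (Inl (s, i))) - (\<Sum>j\<in>J s. v (Inr (s, j))) = b s"
      using u v that by (auto simp: feasible_set_def of_coords_def)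
    then show ?thesis
      by (simp add: sum.distrib flip: sum_distrib_left) (simp add: algebra_simps)
  qed
  have "of_coords (\<lambda>c. (1 - t) * u c + t * v c) \<in> ?W"
    using u v t balance
    by (auto simp: feasible_set_def bid_cap_def of_coords_def
        intro!: convex_comb_ge convex_comb_le convex_comb_le_ereal)
  then show "(\<lambda>c. (1 - t) * u c + t * v c) \<in> {v. of_coords v \<in> ?W}" by simp
qed

lemma closed_truncated_feasible:
  "closed {v. of_coords v \<in> feasible_set n I J b \<alpha>1 \<alpha>2 \<beta>1 \<beta>2 \<inter> bid_cap n J \<beta>2 R}"
  unfolding feasible_set_def bid_cap_def of_coords_def Ball_def Int_iff mem_Collect_eq prod.case
    fst_conv snd_conv
  by (intro closed_Collect_conj closed_Collect_all closed_Collect_imp open_Collect_const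
      closed_Collect_eq closed_Collect_le continuous_on_sum continuous_on_diff continuous_on_const
      continuous_on_ereal continuous_on_coordinate[OF continuous_on_id])

lemma compact_if_closed_coordinatewise_bounded:
  fixes K :: "('c \<Rightarrow> real) set"
  assumes "closed K" and "\<And>v c. v \<in> K \<Longrightarrow> lo c \<le> v c \<and> v c \<le> hi c"
  shows "compact K"
proof -
  have "compactin (product_topology (\<lambda>c. euclidean) UNIV) (PiE UNIV (\<lambda>c. {lo c..hi c}))"
    by (simp add: compactin_PiE)
  then have "compact (PiE UNIV (\<lambda>c. {lo c..hi c}) \<inter> K)"
    using assms(1) by (intro compact_Int_closed) (simp_all add: euclidean_product_topology)
  moreover have "PiE UNIV (\<lambda>c. {lo c..hi c}) \<inter> K = K" using assms(2) by auto
  ultimately show ?thesis by simp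
qed

lemma le_of_balance:
  fixes x :: "'a \<Rightarrow> real"
  assumes "finite I" and "i \<in> I" and "(\<Sum>i\<in>I. x i) - (\<Sum>j\<in>J. y j) = b"
    and "\<And>i'. i' \<in> I \<Longrightarrow> lo i' \<le> x i'" and "\<And>j. j \<in> J \<Longrightarrow> y j \<le> hi j"
  shows "x i \<le> b + (\<Sum>j\<in>J. hi j) - (\<Sum>i'\<in>I - {i}. lo i')"
proof -
  have "(\<Sum>i\<in>I. x i) = x i + (\<Sum>i'\<in>I - {i}. x i')" using assms(1,2) by (simp add: sum.remove)
  moreover have "(\<Sum>i'\<in>I - {i}. lo i') \<le> (\<Sum>i'\<in>I - {i}. x i')" using assms(4) by (intro sum_mono) auto
  moreover have "(\<Sum>j\<in>J. y j) \<le> (\<Sum>j\<in>J. hi j)" using assms(5) by (intro sum_mono) auto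
  ultimately show ?thesis using assms(3) by linarith
qed

lemma compact_truncated_feasible:
  fixes I :: "nat \<Rightarrow> 'i set" and J :: "nat \<Rightarrow> 'j set"
  assumes finI: "\<And>s. s \<in> {1..n} \<Longrightarrow> finite (I s)"
  shows "compact {v. of_coords v \<in> feasible_set n I J b \<alpha>1 \<alpha>2 \<beta>1 \<beta>2 \<inter> bid_cap n J \<beta>2 R}"
    (is "compact ?K")
proof -
  define bid_hi where "bid_hi j s = (if \<beta>2 j s = \<infinity> then R else real_of_ereal (\<beta>2 j s))" for j s
  define offer_hi where
    "offer_hi i s = b s + (\<Sum>j\<in>J s. bid_hi j s) - (\<Sum>i'\<in>I s - {i}. \<alpha>1 i' s)" for i s
  define lo where "lo c = (case c of
      Inl (s, i) \<Rightarrow> if s \<in> {1..n} \<and> i \<in> I s then \<alpha>1 i s else 0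
    | Inr (s, j) \<Rightarrow> if s \<in> {1..n} \<and> j \<in> J s then \<beta>1 j s else 0)" for c
  define hi where "hi c = (case c of
      Inl (s, i) \<Rightarrow> if s \<in> {1..n} \<and> i \<in> I s then offer_hi i s else 0
    | Inr (s, j) \<Rightarrow> if s \<in> {1..n} \<and> j \<in> J s then bid_hi j s else 0)" for c
  have bid: "\<beta>1 j s \<le> y j s \<and> y j s \<le> bid_hi j s"
    if "(x, y) \<in> feasible_set n I J b \<alpha>1 \<alpha>2 \<beta>1 \<beta>2 \<inter> bid_cap n J \<beta>2 R" "s \<in> {1..n}" "j \<in> J s"
    for x y j s
  proof -
    have "\<beta>1 j s \<le> y j s" "ereal (y j s) \<le> \<beta>2 j s" "\<beta>2 j s = \<infinity> \<longrightarrow> y j s \<le> R"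
      using that by (auto simp: feasible_set_def bid_cap_def)
    then show ?thesis by (cases "\<beta>2 j s") (auto simp: bid_hi_def)
  qed
  have offer: "\<alpha>1 i s \<le> x i s \<and> x i s \<le> offer_hi i s"
    if xy: "(x, y) \<in> feasible_set n I J b \<alpha>1 \<alpha>2 \<beta>1 \<beta>2 \<inter> bid_cap n J \<beta>2 R"
      and s: "s \<in> {1..n}" and i: "i \<in> I s" for x y i s
  proof
    show "\<alpha>1 i s \<le> x i s" using xy s i by (auto simp: feasible_set_def)
    show "x i s \<le> offer_hi i s"
      unfolding offer_hi_def
      by (rule le_of_balance[OF finI[OF s] i])
        (use xy s bid[OF xy s] in \<open>auto simp: feasible_set_def\<close>)
  qed
  have "lo c \<le> v c \<and> v c \<le> hi c" if "v \<in> ?K" for v c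
  proof -
    define x where "x i s = v (Inl (s, i))" for i s
    define y where "y j s = v (Inr (s, j))" for j s
    have W: "(x, y) \<in> feasible_set n I J b \<alpha>1 \<alpha>2 \<beta>1 \<beta>2 \<inter> bid_cap n J \<beta>2 R"
      using that by (simp add: of_coords_def x_def[abs_def] y_def[abs_def])
    then have "\<forall>s i. \<not> (s \<in> {1..n} \<and> i \<in> I s) \<longrightarrow> x i s = 0"
      and "\<forall>s j. \<not> (s \<in> {1..n} \<and> j \<in> J s) \<longrightarrow> y j s = 0"
      by (auto simp: feasible_set_def)
    then show ?thesis
      using offer[OF W] bid[OF W]
      by (cases c) (auto simp: lo_def hi_def x_def y_def)
  qed
  then show ?thesis
    by (rule compact_if_closed_coordinatewise_bounded[OF closed_truncated_feasible])
qed

lemma truncated_market_vi_solvable: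
  fixes n :: nat and I :: "nat \<Rightarrow> 'i set" and J :: "nat \<Rightarrow> 'j set" and b :: "nat \<Rightarrow> real"
    and \<alpha>1 :: "'i \<Rightarrow> nat \<Rightarrow> real" and \<alpha>2 :: "'i \<Rightarrow> nat \<Rightarrow> ereal"
    and \<beta>1 :: "'j \<Rightarrow> nat \<Rightarrow> real" and \<beta>2 :: "'j \<Rightarrow> nat \<Rightarrow> ereal" and R :: real
  defines "WR \<equiv> feasible_set n I J b \<alpha>1 \<alpha>2 \<beta>1 \<beta>2 \<inter> bid_cap n J \<beta>2 R"
  assumes finI: "\<And>s. s \<in> {1..n} \<Longrightarrow> finite (I s)"
    and finJ: "\<And>s. s \<in> {1..n} \<Longrightarrow> finite (J s)"
    and g_cont: "\<And>s i. s \<in> {1..n} \<Longrightarrow> i \<in> I s \<Longrightarrow> continuous_on WR (g i s)"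
    and h_cont: "\<And>s j. s \<in> {1..n} \<Longrightarrow> j \<in> J s \<Longrightarrow> continuous_on WR (h j s)"
    and "WR \<noteq> {}"
  shows "\<exists>wb\<in>WR. \<forall>w\<in>WR. market_vi_form n I J g h wb w \<ge> 0"
proof -
  define K where "K = {v. of_coords v \<in> WR}"
  define G where "G c v = (case c of
      Inl (s, i) \<Rightarrow> g i s (of_coords v) | Inr (s, j) \<Rightarrow> - h j s (of_coords v))" for c v
  have to_coords_K: "to_coords w \<in> K" if "w \<in> WR" for w
    using that by (simp add: K_def)
  have "\<exists>vb\<in>K. \<forall>u\<in>K. (\<Sum>c\<in>market_coords n I J. G c vb * (u c - vb c)) \<ge> 0"
  proof (rule hartman_stampacchia)
    show "finite (market_coords n I J)" using finI finJ by (rule finite_market_coords)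
    show "compact K" unfolding K_def WR_def using finI by (rule compact_truncated_feasible)
    show "K \<noteq> {}" using \<open>WR \<noteq> {}\<close> to_coords_K by blast
    show "pointwise_convex K"
      unfolding K_def WR_def by (rule pointwise_convex_truncated_feasible)
    show "\<forall>v\<in>K. \<forall>c. c \<notin> market_coords n I J \<longrightarrow> v c = 0"
      using feasible_vanishes_off_market_coords by (fastforce simp: K_def WR_def)
    have of_coords_K: "continuous_on K of_coords" "of_coords ` K \<subseteq> WR"
      by (auto simp: K_def continuous_on_of_coords)
    show "continuous_on K (G c)" if "c \<in> market_coords n I J" for c
      using that continuous_on_compose2[OF g_cont of_coords_K]
        continuous_on_compose2[OF h_cont of_coords_K]
      by (auto simp: market_coords_def G_def intro!: continuous_on_minus)
  qed
  then obtain vb where vb: "vb \<in> K"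
    and vi: "\<And>u. u \<in> K \<Longrightarrow> (\<Sum>c\<in>market_coords n I J. G c vb * (u c - vb c)) \<ge> 0"
    by blast
  have identity: "(\<Sum>c\<in>market_coords n I J. G c vb * (to_coords w c - vb c))
      = market_vi_form n I J g h (of_coords vb) w" for w
  proof -
    have "(\<Sum>c\<in>market_coords n I J. G c vb * (to_coords w c - vb c))
      = (\<Sum>s\<in>{1..n}. (\<Sum>i\<in>I s. G (Inl (s, i)) vb * (to_coords w (Inl (s, i)) - vb (Inl (s, i))))
          + (\<Sum>j\<in>J s. G (Inr (s, j)) vb * (to_coords w (Inr (s, j)) - vb (Inr (s, j)))))"
      by (rule sum_market_coords[OF finI finJ])
    also have "\<dots> = market_vi_form n I J g h (of_coords vb) w"
      unfolding market_vi_form_def G_def to_coords_def of_coords_def by (simp add: sum_negf)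
    finally show ?thesis .
  qed
  have "market_vi_form n I J g h (of_coords vb) w \<ge> 0" if "w \<in> WR" for w
    using vi[OF to_coords_K[OF that]] by (simp add: identity)
  moreover have "of_coords vb \<in> WR" using vb by (simp add: K_def)
  ultimately show ?thesis by blast
qed

definition shifted_segment ::
  "('i,'j) point \<Rightarrow> ('i,'j) point \<Rightarrow> ('i \<Rightarrow> nat \<Rightarrow> real) \<Rightarrow> ('j \<Rightarrow> nat \<Rightarrow> real) \<Rightarrow> real
   \<Rightarrow> ('i,'j) point" where
  "shifted_segment wb w \<Delta> \<delta> t =
     ((\<lambda>i s. fst wb i s + t * (fst w i s - fst wb i s) - t * \<Delta> i s),
      (\<lambda>j s. snd wb j s + t * (snd w j s - snd wb j s) - t * \<delta> j s))"

lemma market_vi_form_shifted_segment: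
  "market_vi_form n I J g h wb (shifted_segment wb w \<Delta> \<delta> t)
   = t * (market_vi_form n I J g h wb w
          - (\<Sum>s\<in>{1..n}. (\<Sum>i\<in>I s. g i s wb * \<Delta> i s) - (\<Sum>j\<in>J s. h j s wb * \<delta> j s)))"
proof -
  have "market_vi_form n I J g h wb (shifted_segment wb w \<Delta> \<delta> t)
      = (\<Sum>s\<in>{1..n}. t * ((\<Sum>i\<in>I s. g i s wb * (fst w i s - fst wb i s))
                            - (\<Sum>j\<in>J s. h j s wb * (snd w j s - snd wb j s)))
                     - t * ((\<Sum>i\<in>I s. g i s wb * \<Delta> i s) - (\<Sum>j\<in>J s. h j s wb * \<delta> j s)))"
    unfolding market_vi_form_def
    by (intro sum.cong refl)
      (simp add: shifted_segment_def algebra_simps sum.distrib sum_subtractf sum_distrib_left)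
  also have "\<dots> = t * (market_vi_form n I J g h wb w
          - (\<Sum>s\<in>{1..n}. (\<Sum>i\<in>I s. g i s wb * \<Delta> i s) - (\<Sum>j\<in>J s. h j s wb * \<delta> j s)))"
    by (simp add: market_vi_form_def sum_subtractf right_diff_distrib flip: sum_distrib_left)
  finally show ?thesis .
qed

lemma segment_point_within_bounds:
  fixes p q t :: real
  assumes "lo \<le> p" "ereal p \<le> hi" "lo \<le> q" "ereal q \<le> hi" "0 \<le> t" "t \<le> 1"
  shows "lo \<le> p + t * (q - p) \<and> ereal (p + t * (q - p)) \<le> hi"
proof -
  have "p + t * (q - p) = (1 - t) * p + t * q" by (simp add: algebra_simps)
  then show ?thesis using assms by (auto intro!: convex_comb_ge convex_comb_le_ereal)
qed

lemma shifted_segment_feasible: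
  fixes n :: nat and I :: "nat \<Rightarrow> 'i set" and J :: "nat \<Rightarrow> 'j set" and b :: "nat \<Rightarrow> real"
    and \<alpha>1 :: "'i \<Rightarrow> nat \<Rightarrow> real" and \<alpha>2 :: "'i \<Rightarrow> nat \<Rightarrow> ereal"
    and \<beta>1 :: "'j \<Rightarrow> nat \<Rightarrow> real" and \<beta>2 :: "'j \<Rightarrow> nat \<Rightarrow> ereal"
  defines "W \<equiv> feasible_set n I J b \<alpha>1 \<alpha>2 \<beta>1 \<beta>2"
  assumes wb: "(xb, yb) \<in> W \<inter> bid_cap n J \<beta>2 R" and w: "(x, y) \<in> W"
    and t: "0 < t" "t \<le> 1"
    and \<Delta>_nonneg: "\<And>i s. 0 \<le> \<Delta> i s"
    and \<Delta>_supp: "\<And>i s. \<Delta> i s \<noteq> 0 \<Longrightarrow> s \<in> {1..n} \<and> i \<in> I s"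
    and \<Delta>_small: "\<And>i s. \<Delta> i s \<noteq> 0 \<Longrightarrow> \<alpha>1 i s \<le> xb i s + t * (x i s - xb i s) - t * \<Delta> i s"
    and \<delta>_def: "\<And>j s. \<delta> j s = (if s \<in> {1..n} \<and> j \<in> J s \<and> \<beta>2 j s = \<infinity> \<and> yb j s = R
                              then max 0 (y j s - yb j s) else 0)"
    and balance: "\<And>s. s \<in> {1..n} \<Longrightarrow> (\<Sum>i\<in>I s. \<Delta> i s) = (\<Sum>j\<in>J s. \<delta> j s)"
    and cap: "\<And>s j. s \<in> {1..n} \<Longrightarrow> j \<in> J s \<Longrightarrow> \<beta>2 j s = \<infinity> \<Longrightarrow> yb j s < R
                \<Longrightarrow> yb j s + t * (y j s - yb j s) - t * \<delta> j s \<le> R"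
  shows "shifted_segment (xb, yb) (x, y) \<Delta> \<delta> t \<in> W \<inter> bid_cap n J \<beta>2 R"
proof -
  let ?xt = "\<lambda>i s. xb i s + t * (x i s - xb i s) - t * \<Delta> i s"
  let ?yt = "\<lambda>j s. yb j s + t * (y j s - yb j s) - t * \<delta> j s"
  note w = feasible_setD[OF w[unfolded W_def]] and wb = feasible_setD[of xb yb, OF wb[unfolded W_def, THEN IntD1]]
  have xt_zero: "?xt i s = 0" if "s \<notin> {1..n} \<or> i \<notin> I s" for i s
    using that w(1) wb(1) \<Delta>_supp by fastforce
  have yt_zero: "?yt j s = 0" if "s \<notin> {1..n} \<or> j \<notin> J s" for j s
    using that w(2) wb(2) \<delta>_def by auto
  have xt_balance: "(\<Sum>i\<in>I s. ?xt i s) - (\<Sum>j\<in>J s. ?yt j s) = b s" if "s \<in> {1..n}" for s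
    using balance[OF that] w(3)[OF that] wb(3)[OF that]
    by (simp add: sum.distrib sum_subtractf algebra_simps flip: sum_distrib_left)
  have xt_bounds: "\<alpha>1 i s \<le> ?xt i s \<and> ereal (?xt i s) \<le> \<alpha>2 i s" if "s \<in> {1..n}" "i \<in> I s" for i s
  proof
    have seg: "\<alpha>1 i s \<le> xb i s + t * (x i s - xb i s) \<and> ereal (xb i s + t * (x i s - xb i s)) \<le> \<alpha>2 i s"
      using w(4)[OF that] wb(4)[OF that] t by (intro segment_point_within_bounds) auto
    then show "\<alpha>1 i s \<le> ?xt i s" using \<Delta>_small[of i s] by (cases "\<Delta> i s = 0") auto
    have "ereal (?xt i s) \<le> ereal (xb i s + t * (x i s - xb i s))" using \<Delta>_nonneg[of i s] t by simp
    with seg show "ereal (?xt i s) \<le> \<alpha>2 i s" by (blast intro: order_trans)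
  qed
  have stay_or_move: "?yt j s = yb j s \<or> ?yt j s = yb j s + t * (y j s - yb j s)" for j s
    using t by (auto simp: \<delta>_def max_def algebra_simps)
  have yt_bounds: "\<beta>1 j s \<le> ?yt j s \<and> ereal (?yt j s) \<le> \<beta>2 j s" if "s \<in> {1..n}" "j \<in> J s" for j s
  proof -
    have "\<beta>1 j s \<le> yb j s + t * (y j s - yb j s) \<and> ereal (yb j s + t * (y j s - yb j s)) \<le> \<beta>2 j s"
      using w(5)[OF that] wb(5)[OF that] t by (intro segment_point_within_bounds) auto
    then show ?thesis using stay_or_move[of j s] wb(5)[OF that] by auto
  qed
  have yt_cap: "?yt j s \<le> R" if "s \<in> {1..n}" "j \<in> J s" "\<beta>2 j s = \<infinity>" for j s
  proof (cases "yb j s = R")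
    case True
    then show ?thesis using that t by (auto simp: \<delta>_def max_def algebra_simps mult_left_mono)
  next
    case False
    then have "yb j s < R" using assms(2) that by (force simp: bid_cap_def)
    then show ?thesis using cap that by blast
  qed
  show ?thesis
    unfolding shifted_segment_def W_def feasible_set_def bid_cap_def
    using xt_zero yt_zero xt_balance xt_bounds yt_bounds yt_cap by auto
qed

lemma tendsto_affine_at_right_zero: "tendsto (\<lambda>t. c + t * d - t * e) (c::real) (at_right 0)"
proof -
  have "tendsto (\<lambda>t. c + t * d - t * e) (c + 0 * d - 0 * e) (at_right 0)"
    by (intro tendsto_intros)
  then show ?thesis by simp
qed

lemma eventually_shifted_segment_feasible:
  fixes n :: nat and I :: "nat \<Rightarrow> 'i set" and J :: "nat \<Rightarrow> 'j set" and b :: "nat \<Rightarrow> real"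
    and \<alpha>1 :: "'i \<Rightarrow> nat \<Rightarrow> real" and \<alpha>2 :: "'i \<Rightarrow> nat \<Rightarrow> ereal"
    and \<beta>1 :: "'j \<Rightarrow> nat \<Rightarrow> real" and \<beta>2 :: "'j \<Rightarrow> nat \<Rightarrow> ereal"
  defines "W \<equiv> feasible_set n I J b \<alpha>1 \<alpha>2 \<beta>1 \<beta>2"
  assumes finI: "\<And>s. s \<in> {1..n} \<Longrightarrow> finite (I s)"
    and finJ: "\<And>s. s \<in> {1..n} \<Longrightarrow> finite (J s)"
    and wb: "(xb, yb) \<in> W \<inter> bid_cap n J \<beta>2 R" and w: "(x, y) \<in> W"
    and \<Delta>_nonneg: "\<And>i s. 0 \<le> \<Delta> i s"
    and \<Delta>_supp: "\<And>i s. \<Delta> i s \<noteq> 0 \<Longrightarrow> s \<in> {1..n} \<and> i \<in> I s \<and> \<alpha>1 i s < xb i s"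
    and \<delta>_def: "\<And>j s. \<delta> j s = (if s \<in> {1..n} \<and> j \<in> J s \<and> \<beta>2 j s = \<infinity> \<and> yb j s = R
                              then max 0 (y j s - yb j s) else 0)"
    and balance: "\<And>s. s \<in> {1..n} \<Longrightarrow> (\<Sum>i\<in>I s. \<Delta> i s) = (\<Sum>j\<in>J s. \<delta> j s)"
  shows "\<forall>\<^sub>F t in at_right 0. shifted_segment (xb, yb) (x, y) \<Delta> \<delta> t \<in> W \<inter> bid_cap n J \<beta>2 R"
proof -
  have lower: "\<forall>\<^sub>F t in at_right 0. \<forall>s\<in>{1..n}. \<forall>i\<in>I s.
      \<Delta> i s \<noteq> 0 \<longrightarrow> \<alpha>1 i s \<le> xb i s + t * (x i s - xb i s) - t * \<Delta> i s"
  proof (intro eventually_ball_finite finite_atLeastAtMost ballI)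
    fix s i assume s: "s \<in> {1..n}"
    show "finite (I s)" using finI[OF s] .
    show "\<forall>\<^sub>F t in at_right 0. \<Delta> i s \<noteq> 0 \<longrightarrow> \<alpha>1 i s \<le> xb i s + t * (x i s - xb i s) - t * \<Delta> i s"
    proof (cases "\<Delta> i s = 0")
      case False
      then have "\<alpha>1 i s < xb i s" using \<Delta>_supp by blast
      from order_tendstoD(1)[OF tendsto_affine_at_right_zero[of "xb i s" "x i s - xb i s" "\<Delta> i s"] this]
      show ?thesis
        by (rule eventually_mono) auto
    qed simp
  qed
  have cap: "\<forall>\<^sub>F t in at_right 0. \<forall>s\<in>{1..n}. \<forall>j\<in>J s.
      \<beta>2 j s = \<infinity> \<longrightarrow> yb j s < R \<longrightarrow> yb j s + t * (y j s - yb j s) - t * \<delta> j s \<le> R"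
  proof (intro eventually_ball_finite finite_atLeastAtMost ballI)
    fix s j assume s: "s \<in> {1..n}"
    show "finite (J s)" using finJ[OF s] .
    show "\<forall>\<^sub>F t in at_right 0.
        \<beta>2 j s = \<infinity> \<longrightarrow> yb j s < R \<longrightarrow> yb j s + t * (y j s - yb j s) - t * \<delta> j s \<le> R"
    proof (cases "yb j s < R")
      case True
      from order_tendstoD(2)[OF tendsto_affine_at_right_zero[of "yb j s" "y j s - yb j s" "\<delta> j s"] this]
      show ?thesis
        by (rule eventually_mono) auto
    qed simp
  qed
  have "\<forall>\<^sub>F t in at_right 0. 0 < t \<and> t \<le> (1::real)"
    by (rule eventually_at_rightI[of 0 1]) auto
  then show ?thesis
    using lower cap
  proof eventually_elim
    case (elim t)
    show ?case
      unfolding W_def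
      by (rule shifted_segment_feasible[OF wb[unfolded W_def] w[unfolded W_def]])
        (use elim \<Delta>_nonneg \<Delta>_supp \<delta>_def balance in auto)
  qed
qed

lemma sum_reassigned_weights:
  fixes f :: "'a \<Rightarrow> 'b::comm_semiring_1"
  assumes "finite L" and "finite A" and "k ` L \<subseteq> A"
  shows "(\<Sum>a\<in>A. f a * (\<Sum>l\<in>{l\<in>L. k l = a}. \<delta> l)) = (\<Sum>l\<in>L. f (k l) * \<delta> l)"
proof -
  have "(\<Sum>a\<in>A. f a * (\<Sum>l\<in>{l\<in>L. k l = a}. \<delta> l)) = (\<Sum>a\<in>A. \<Sum>l\<in>{l\<in>L. k l = a}. f (k l) * \<delta> l)"
    by (intro sum.cong refl) (simp add: sum_distrib_left)
  also have "\<dots> = (\<Sum>l\<in>L. f (k l) * \<delta> l)"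
    by (rule sum.group[OF assms])
  finally show ?thesis .
qed

lemma compensating_offer_cut:
  fixes I :: "nat \<Rightarrow> 'i set" and J :: "nat \<Rightarrow> 'j set" and \<delta> :: "'j \<Rightarrow> nat \<Rightarrow> real"
    and wb :: "('i,'j) point"
  assumes finI: "\<And>s. s \<in> {1..n} \<Longrightarrow> finite (I s)"
    and finJ: "\<And>s. s \<in> {1..n} \<Longrightarrow> finite (J s)"
    and \<delta>_nonneg: "\<And>j s. 0 \<le> \<delta> j s"
    and \<delta>_supp: "\<And>j s. \<delta> j s \<noteq> 0 \<Longrightarrow>
        s \<in> {1..n} \<and> j \<in> J s \<and> (\<exists>k\<in>I s. \<alpha>1 k s < fst wb k s \<and> h j s wb \<le> g k s wb)"
  obtains \<Delta> where "\<And>i s. 0 \<le> \<Delta> i s"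
    and "\<And>i s. \<Delta> i s \<noteq> 0 \<Longrightarrow> s \<in> {1..n} \<and> i \<in> I s \<and> \<alpha>1 i s < fst wb i s"
    and "\<And>s. s \<in> {1..n} \<Longrightarrow> (\<Sum>i\<in>I s. \<Delta> i s) = (\<Sum>j\<in>J s. \<delta> j s)"
    and "\<And>s. s \<in> {1..n} \<Longrightarrow> (\<Sum>j\<in>J s. h j s wb * \<delta> j s) \<le> (\<Sum>i\<in>I s. g i s wb * \<Delta> i s)"
proof -
  define L where "L s = {l \<in> J s. \<delta> l s \<noteq> 0}" for s
  define k where "k s l = (SOME k. k \<in> I s \<and> \<alpha>1 k s < fst wb k s \<and> h l s wb \<le> g k s wb)" for s l
  have k: "k s l \<in> I s" "\<alpha>1 (k s l) s < fst wb (k s l) s" "h l s wb \<le> g (k s l) s wb"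
    if "l \<in> L s" for s l
  proof -
    have "\<exists>k. k \<in> I s \<and> \<alpha>1 k s < fst wb k s \<and> h l s wb \<le> g k s wb"
      using \<delta>_supp[of l s] that by (auto simp: L_def)
    from someI_ex[OF this]
    show "k s l \<in> I s" "\<alpha>1 (k s l) s < fst wb (k s l) s" "h l s wb \<le> g (k s l) s wb"
      unfolding k_def by auto
  qed
  \<comment> \<open>the cut \<open>\<delta> l s\<close> of each buyer \<open>l\<close> is charged to its seller \<open>k s l\<close>\<close>
  define \<Delta> where "\<Delta> i s = (if s \<in> {1..n} then \<Sum>l\<in>{l\<in>L s. k s l = i}. \<delta> l s else 0)" for i s
  have \<delta>_L: "(\<Sum>j\<in>J s. f j * \<delta> j s) = (\<Sum>l\<in>L s. f l * \<delta> l s)" if "s \<in> {1..n}" for f s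
    using finJ[OF that] by (intro sum.mono_neutral_right) (auto simp: L_def)
  have transfer: "(\<Sum>i\<in>I s. f i * \<Delta> i s) = (\<Sum>l\<in>L s. f (k s l) * \<delta> l s)" if "s \<in> {1..n}" for f s
  proof -
    have "(\<Sum>i\<in>I s. f i * \<Delta> i s) = (\<Sum>i\<in>I s. f i * (\<Sum>l\<in>{l\<in>L s. k s l = i}. \<delta> l s))"
      using that by (simp add: \<Delta>_def)
    also have "\<dots> = (\<Sum>l\<in>L s. f (k s l) * \<delta> l s)"
      by (rule sum_reassigned_weights) (use finI finJ k(1) that in \<open>auto simp: L_def\<close>)
    finally show ?thesis .
  qed
  show thesis
  proof (rule that)
    show "0 \<le> \<Delta> i s" for i s by (simp add: \<Delta>_def \<delta>_nonneg sum_nonneg)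
    show "s \<in> {1..n} \<and> i \<in> I s \<and> \<alpha>1 i s < fst wb i s" if "\<Delta> i s \<noteq> 0" for i s
    proof -
      have "s \<in> {1..n}" using that by (auto simp: \<Delta>_def split: if_splits)
      moreover have "{l\<in>L s. k s l = i} \<noteq> {}"
      proof
        assume "{l\<in>L s. k s l = i} = {}"
        then have "\<Delta> i s = 0" unfolding \<Delta>_def by (simp only: sum.empty if_cancel)
        with that show False by blast
      qed
      ultimately show ?thesis using k(1,2) by blast
    qed
    show "(\<Sum>i\<in>I s. \<Delta> i s) = (\<Sum>j\<in>J s. \<delta> j s)" if "s \<in> {1..n}" for s
      using transfer[OF that, of "\<lambda>_. 1"] \<delta>_L[OF that, of "\<lambda>_. 1"] by simp
    show "(\<Sum>j\<in>J s. h j s wb * \<delta> j s) \<le> (\<Sum>i\<in>I s. g i s wb * \<Delta> i s)" if "s \<in> {1..n}" for s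
    proof -
      have "(\<Sum>j\<in>J s. h j s wb * \<delta> j s) = (\<Sum>l\<in>L s. h l s wb * \<delta> l s)" by (rule \<delta>_L[OF that])
      also have "\<dots> \<le> (\<Sum>l\<in>L s. g (k s l) s wb * \<delta> l s)"
        using k(3) \<delta>_nonneg by (intro sum_mono mult_right_mono) auto
      also have "\<dots> = (\<Sum>i\<in>I s. g i s wb * \<Delta> i s)" by (rule transfer[OF that, symmetric])
      finally show ?thesis .
    qed
  qed
qed

lemma truncated_market_vi_solution_extends:
  fixes n :: nat and I :: "nat \<Rightarrow> 'i set" and J :: "nat \<Rightarrow> 'j set" and b :: "nat \<Rightarrow> real"
    and \<alpha>1 :: "'i \<Rightarrow> nat \<Rightarrow> real" and \<alpha>2 :: "'i \<Rightarrow> nat \<Rightarrow> ereal"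
    and \<beta>1 :: "'j \<Rightarrow> nat \<Rightarrow> real" and \<beta>2 :: "'j \<Rightarrow> nat \<Rightarrow> ereal"
  defines "W \<equiv> feasible_set n I J b \<alpha>1 \<alpha>2 \<beta>1 \<beta>2"
  assumes finI: "\<And>s. s \<in> {1..n} \<Longrightarrow> finite (I s)"
    and finJ: "\<And>s. s \<in> {1..n} \<Longrightarrow> finite (J s)"
    and wb: "(xb, yb) \<in> W \<inter> bid_cap n J \<beta>2 R"
    and vi: "\<forall>w\<in>W \<inter> bid_cap n J \<beta>2 R. market_vi_form n I J g h (xb, yb) w \<ge> 0"
    and seller: "\<And>s l. s \<in> {1..n} \<Longrightarrow> l \<in> J s \<Longrightarrow> \<beta>2 l s = \<infinity> \<Longrightarrow> yb l s = R \<Longrightarrow>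
        \<exists>k\<in>I s. \<alpha>1 k s < xb k s \<and> h l s (xb, yb) \<le> g k s (xb, yb)"
  shows "\<forall>w\<in>W. market_vi_form n I J g h (xb, yb) w \<ge> 0"
proof
  fix w assume "w \<in> W"
  then obtain x y where w: "w = (x, y)" "(x, y) \<in> W" by (cases w) auto
  define \<delta> where "\<delta> j s = (if s \<in> {1..n} \<and> j \<in> J s \<and> \<beta>2 j s = \<infinity> \<and> yb j s = R
                              then max 0 (y j s - yb j s) else 0)" for j s
  have \<delta>_supp: "s \<in> {1..n} \<and> j \<in> J s \<and>
      (\<exists>k\<in>I s. \<alpha>1 k s < fst (xb, yb) k s \<and> h j s (xb, yb) \<le> g k s (xb, yb))" if "\<delta> j s \<noteq> 0" for j s
  proof -
    have "s \<in> {1..n}" "j \<in> J s" "\<beta>2 j s = \<infinity>" "yb j s = R"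
      using that by (auto simp: \<delta>_def split: if_splits)
    then show ?thesis using seller by simp
  qed
  have "\<And>j s. 0 \<le> \<delta> j s" by (simp add: \<delta>_def)
  from compensating_offer_cut[where \<delta>=\<delta> and wb="(xb, yb)" and g=g and h=h and ?\<alpha>1.0=\<alpha>1,
      OF finI finJ this \<delta>_supp]
  obtain \<Delta> where \<Delta>_nonneg: "\<And>i s. 0 \<le> \<Delta> i s"
    and \<Delta>_supp: "\<And>i s. \<Delta> i s \<noteq> 0 \<Longrightarrow> s \<in> {1..n} \<and> i \<in> I s \<and> \<alpha>1 i s < fst (xb, yb) i s"
    and balance: "\<And>s. s \<in> {1..n} \<Longrightarrow> (\<Sum>i\<in>I s. \<Delta> i s) = (\<Sum>j\<in>J s. \<delta> j s)"
    and gain: "\<And>s. s \<in> {1..n} \<Longrightarrow>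
        (\<Sum>j\<in>J s. h j s (xb, yb) * \<delta> j s) \<le> (\<Sum>i\<in>I s. g i s (xb, yb) * \<Delta> i s)"
    by auto
  have "\<forall>\<^sub>F t in at_right 0. shifted_segment (xb, yb) (x, y) \<Delta> \<delta> t \<in> W \<inter> bid_cap n J \<beta>2 R"
    unfolding W_def
    by (rule eventually_shifted_segment_feasible[OF finI finJ wb[unfolded W_def] w(2)[unfolded W_def]])
      (use \<Delta>_nonneg \<Delta>_supp balance in \<open>auto simp: \<delta>_def\<close>)
  with eventually_at_right_less[of 0]
  have "\<forall>\<^sub>F t in at_right 0. 0 < t \<and> shifted_segment (xb, yb) (x, y) \<Delta> \<delta> t \<in> W \<inter> bid_cap n J \<beta>2 R"
    by eventually_elim auto
  from eventually_happens'[OF trivial_limit_at_right_real this]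
  obtain t where t: "0 < t" and feasible: "shifted_segment (xb, yb) (x, y) \<Delta> \<delta> t \<in> W \<inter> bid_cap n J \<beta>2 R"
    by blast
  define E where "E = (\<Sum>s\<in>{1..n}. (\<Sum>i\<in>I s. g i s (xb, yb) * \<Delta> i s) - (\<Sum>j\<in>J s. h j s (xb, yb) * \<delta> j s))"
  have "E \<ge> 0" unfolding E_def using gain by (intro sum_nonneg) auto
  moreover have "0 \<le> market_vi_form n I J g h (xb, yb) (shifted_segment (xb, yb) (x, y) \<Delta> \<delta> t)"
    using vi feasible by blast
  then have "0 \<le> t * (market_vi_form n I J g h (xb, yb) (x, y) - E)"
    by (simp add: market_vi_form_shifted_segment E_def)
  ultimately show "market_vi_form n I J g h (xb, yb) w \<ge> 0"
    using t w(1) by (simp add: zero_le_mult_iff)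
qed

lemma finite_strict_upper_bound:
  fixes f :: "'a \<Rightarrow> real"
  assumes "finite A"
  obtains R where "c < R" and "\<And>a. a \<in> A \<Longrightarrow> f a < R"
proof
  show "c < max c (Max (f ` A)) + 1" by simp
  show "f a < max c (Max (f ` A)) + 1" if "a \<in> A" for a
  proof -
    have "f a \<le> Max (f ` A)" using assms that by simp
    then show ?thesis using max.cobounded2[of "Max (f ` A)" c] by linarith
  qed
qed

theorem proposition2p2:
  fixes n :: nat and I :: "nat \<Rightarrow> 'i set" and J :: "nat \<Rightarrow> 'j set"
    and b :: "nat \<Rightarrow> real"
    and \<alpha>1 :: "'i \<Rightarrow> nat \<Rightarrow> real" and \<alpha>2 :: "'i \<Rightarrow> nat \<Rightarrow> ereal"
    and \<beta>1 :: "'j \<Rightarrow> nat \<Rightarrow> real" and \<beta>2 :: "'j \<Rightarrow> nat \<Rightarrow> ereal"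
    and g :: "'i \<Rightarrow> nat \<Rightarrow> ('i,'j) point \<Rightarrow> real"
    and h :: "'j \<Rightarrow> nat \<Rightarrow> ('i,'j) point \<Rightarrow> real"
  defines "W \<equiv> feasible_set n I J b \<alpha>1 \<alpha>2 \<beta>1 \<beta>2"
  assumes finI: "\<And>s. s \<in> {1..n} \<Longrightarrow> finite (I s)"
    and finJ: "\<And>s. s \<in> {1..n} \<Longrightarrow> finite (J s)"
    and \<alpha>_lt: "\<And>s i. s \<in> {1..n} \<Longrightarrow> i \<in> I s \<Longrightarrow> ereal (\<alpha>1 i s) < \<alpha>2 i s"
    and \<beta>_lt: "\<And>s j. s \<in> {1..n} \<Longrightarrow> j \<in> J s \<Longrightarrow> ereal (\<beta>1 j s) < \<beta>2 j s"
    and W_ne: "W \<noteq> {}"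
    and g_cont: "\<And>s i. s \<in> {1..n} \<Longrightarrow> i \<in> I s \<Longrightarrow> continuous_on W (g i s)"
    and h_cont: "\<And>s j. s \<in> {1..n} \<Longrightarrow> j \<in> J s \<Longrightarrow> continuous_on W (h j s)"
    and coercive: "\<exists>r>0. \<forall>x y. (x, y) \<in> W \<longrightarrow> (\<forall>s\<in>{1..n}. \<forall>l\<in>J s.
        \<beta>2 l s = \<infinity> \<longrightarrow> y l s > max r (\<beta>1 l s) \<longrightarrow>
        (\<exists>k\<in>I s. \<alpha>2 k s = \<infinity> \<and> x k s > \<alpha>1 k s \<and> g k s (x, y) \<ge> h l s (x, y)))"
  shows "\<exists>wb\<in>W. \<forall>x y. (x, y) \<in> W \<longrightarrow>
     (\<Sum>s\<in>{1..n}. (\<Sum>i\<in>I s. g i s wb * (x i s - fst wb i s))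
                 - (\<Sum>j\<in>J s. h j s wb * (y j s - snd wb j s))) \<ge> 0"
proof -
  obtain r where "r > 0" and coercive_r: "\<forall>x y. (x, y) \<in> W \<longrightarrow> (\<forall>s\<in>{1..n}. \<forall>l\<in>J s.
      \<beta>2 l s = \<infinity> \<longrightarrow> y l s > max r (\<beta>1 l s) \<longrightarrow>
      (\<exists>k\<in>I s. \<alpha>2 k s = \<infinity> \<and> x k s > \<alpha>1 k s \<and> g k s (x, y) \<ge> h l s (x, y)))"
    using coercive by blast
  obtain x0 y0 where w0: "(x0, y0) \<in> W" using W_ne by auto
  \<comment> \<open>a cap \<open>R\<close> above \<open>r\<close>, above all lower bid bounds, and not binding at \<open>(x0, y0)\<close>\<close>
  have "finite (SIGMA s:{1..n}. J s)" using finJ by auto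
  then obtain R where "r < R"
    and R: "\<And>p. p \<in> (SIGMA s:{1..n}. J s) \<Longrightarrow> max (\<beta>1 (snd p) (fst p)) (y0 (snd p) (fst p)) < R"
    using finite_strict_upper_bound[of _ r "\<lambda>p. max (\<beta>1 (snd p) (fst p)) (y0 (snd p) (fst p))"] by auto
  have "(x0, y0) \<in> W \<inter> bid_cap n J \<beta>2 R"
    using w0 R by (force simp: bid_cap_def)
  then have "\<exists>wb\<in>W \<inter> bid_cap n J \<beta>2 R. \<forall>w\<in>W \<inter> bid_cap n J \<beta>2 R. market_vi_form n I J g h wb w \<ge> 0"
    unfolding W_def
    by (intro truncated_market_vi_solvable[OF finI finJ])
      (auto simp: W_def intro: continuous_on_subset[OF g_cont] continuous_on_subset[OF h_cont])
  then obtain xb yb where wb: "(xb, yb) \<in> W \<inter> bid_cap n J \<beta>2 R"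
    and vi: "\<forall>w\<in>W \<inter> bid_cap n J \<beta>2 R. market_vi_form n I J g h (xb, yb) w \<ge> 0"
    by auto
  have "\<exists>k\<in>I s. \<alpha>1 k s < xb k s \<and> h l s (xb, yb) \<le> g k s (xb, yb)"
    if "s \<in> {1..n}" "l \<in> J s" "\<beta>2 l s = \<infinity>" "yb l s = R" for s l
    using coercive_r wb that \<open>r < R\<close> R[of "(s, l)"] by fastforce
  then have "\<forall>w\<in>W. market_vi_form n I J g h (xb, yb) w \<ge> 0"
    using truncated_market_vi_solution_extends[OF finI finJ wb[unfolded W_def] vi[unfolded W_def]]
    unfolding W_def by blast
  then have "\<forall>x y. (x, y) \<in> W \<longrightarrow> market_vi_form n I J g h (xb, yb) (x, y) \<ge> 0" by blast
  then show ?thesis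
    using wb unfolding market_vi_form_def by (intro bexI[of _ "(xb, yb)"]) simp_all
qed

end
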